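(* Let $\theta\in(-\pi/2,\pi/2)$ and $y>0$ be real. For real $\alpha>0$ define $$f(\alpha)=\prod_{n=0}^\infty\left(\frac{\cosh\left(\pi\cos\theta\sqrt{\left(n+\frac12\right)^2\alpha^2+\alpha y^2}\right)-\sin\left(\pi\left(n+\frac12\right)\alpha\sin\theta\right)}{\cosh\left(\pi\cos\theta\sqrt{\left(n+\frac12\right)^2\alpha^2+\alpha y^2}\right)+\sin\left(\pi\left(n+\frac12\right)\alpha\sin\theta\right)}\right)^{(-1)^n}.$$ Then $f(\alpha)=f(1/\alpha)$ for every $\alpha>0$. *)

theory Defs
  imports "HOL-Analysis.Analysis"
begin

definition fac :: "real \<Rightarrow> real \<Rightarrow> real \<Rightarrow> nat \<Rightarrow> real" where
  "fac \<theta> y \<alpha> n =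
     (let C = cosh (pi * cos \<theta> * sqrt ((real n + 1/2)^2 * \<alpha>^2 + \<alpha> * y^2));
          S = sin (pi * (real n + 1/2) * \<alpha> * sin \<theta>)
      in ((C - S) / (C + S)) powi ((-1) ^ n))"

definition f_prod :: "real \<Rightarrow> real \<Rightarrow> real \<Rightarrow> real" where
  "f_prod \<theta> y \<alpha> = (\<Prod>n. fac \<theta> y \<alpha> n)"

end

theory Submission
  imports Defs
begin

text \<open>The logarithm of the product is \<open>Phi(y^2)\<close>, where \<open>Phi(t) = \<Sum>n. (-1)^n * ell_n(t)\<close> and
  \<open>ell_n = ln ((C - S) / (C + S))\<close>. Expanding \<open>sinh u / (cosh u - cos w)\<close> into partial fractions
  (the Mittag-Leffler series of the cotangent, here derived from the reflection formula for
  the digamma function) turns \<open>Phi'\<close> into a series of rational functions of \<open>t\<close>, and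
  differentiating once more gives an absolutely convergent double series
  \<open>Phi''(t) = cos^4 \<theta> * \<Sum>n m. (-1)^(n+m) * (1/Q\<^sub>+^2 - 1/Q\<^sub>-^2)\<close> with
  \<open>Q\<^sub>\<plusminus> = (n+1/2)^2 \<alpha> \<plusminus> 2 (n+1/2) (m+1/2) sin \<theta> + (m+1/2)^2 / \<alpha> + t cos^2 \<theta>\<close>.
  Replacing \<open>\<alpha>\<close> by \<open>1/\<alpha>\<close> swaps \<open>n\<close> and \<open>m\<close>, so \<open>Phi''\<close> is the same for \<open>\<alpha>\<close> and \<open>1/\<alpha>\<close>.
  Hence the difference of the two \<open>Phi\<close> is affine in \<open>t > 0\<close>; as both tend to \<open>0\<close> for
  \<open>t \<rightarrow> \<infinity>\<close>, they coincide.\<close>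

lemma Digamma_reflection_complex:
  fixes z :: complex
  assumes z: "z \<notin> \<int>"
  shows "Digamma z - Digamma (1 - z) = - (of_real pi * cot (of_real pi * z))"
proof -
  have z1: "z \<notin> \<int>\<^sub>\<le>\<^sub>0" using z nonpos_Ints_subset_Ints by blast
  have z2: "1 - z \<notin> \<int>\<^sub>\<le>\<^sub>0" using z Ints_diff[of 1 "1 - z"] nonpos_Ints_subset_Ints by auto
  have sin_nz: "sin (of_real pi * z) \<noteq> 0" using z by (subst sin_eq_0) auto
  have "((\<lambda>z. Gamma z * Gamma (1 - z)) has_field_derivative
      Gamma z * Gamma (1 - z) * (Digamma z - Digamma (1 - z))) (at z)"
    using z1 z2 by (auto intro!: derivative_eq_intros simp: algebra_simps)
  moreover have "((\<lambda>z. Gamma z * Gamma (1 - z)) has_field_derivative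
      - (of_real pi * (cos (of_real pi * z) * of_real pi)) / (sin (of_real pi * z))^2) (at z)"
    unfolding Gamma_reflection_complex
    using sin_nz by (auto intro!: derivative_eq_intros simp: power2_eq_square)
  ultimately have "of_real pi / sin (of_real pi * z) * (Digamma z - Digamma (1 - z)) =
      - (of_real pi * (cos (of_real pi * z) * of_real pi)) / (sin (of_real pi * z))^2"
    unfolding Gamma_reflection_complex by (rule DERIV_unique)
  hence "sin (of_real pi * z) * (of_real pi * (of_real pi * cos (of_real pi * z) +
           (Digamma z - Digamma (1 - z)) * sin (of_real pi * z))) = 0"
    using sin_nz by (simp add: field_simps power2_eq_square)
  hence "of_real pi * cos (of_real pi * z) + (Digamma z - Digamma (1 - z)) * sin (of_real pi * z) = 0"
    using sin_nz by simp
  thus ?thesis using sin_nz by (simp add: cot_def field_simps)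
qed

lemma cot_partial_fractions_sums:
  fixes z :: complex
  assumes z: "z \<notin> \<int>"
  shows "(\<lambda>k. inverse (1 - z + of_nat k) - inverse (z + of_nat k)) sums
           (- (of_real pi * cot (of_real pi * z)))"
proof -
  have "z \<noteq> 0" "1 - z \<noteq> 0" using z by auto
  from this[THEN summable_Digamma]
  have "(\<lambda>k. inverse (of_nat (Suc k)) - inverse (z + of_nat k)) sums (Digamma z + euler_mascheroni)"
        "(\<lambda>k. inverse (of_nat (Suc k)) - inverse (1 - z + of_nat k))
           sums (Digamma (1 - z) + euler_mascheroni)"
    by (simp_all add: Digamma_def summable_sums)
  from sums_diff[OF this] show ?thesis
    using Digamma_reflection_complex[OF z] by simp
qed

lemma Im_cot_Complex:
  "Im (cot (Complex a b)) = - sinh (2 * b) / (cosh (2 * b) - cos (2 * a))"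
proof -
  define P where "P = (exp b + exp (-b)) / 2"
  define Q where "Q = (exp b - exp (-b)) / 2"
  have e: "exp (2 * b) = exp b * exp b" "exp (-(2 * b)) = exp (-b) * exp (-b)" "exp b * exp (-b) = 1"
    by (simp_all flip: exp_add)
  have PQ: "P^2 = 1 + Q^2"
    unfolding P_def Q_def using e(3) by (simp add: power2_eq_square field_simps)
  have sinh: "sinh (2 * b) = 2 * P * Q" and cosh: "cosh (2 * b) = P^2 + Q^2"
    unfolding P_def Q_def sinh_def cosh_def e(1,2) using e(3) by (simp_all add: power2_eq_square field_simps)
  have den: "(sin a * P)^2 + (cos a * Q)^2 = (sin a)^2 + Q^2"
    using PQ sin_cos_squared_add[of a] by algebra
  have num: "(- sin a * Q) * (sin a * P) - (cos a * P) * (cos a * Q) = - (P * Q)"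
    using sin_cos_squared_add[of a] by algebra
  have "Im (cot (Complex a b)) =
      ((- sin a * Q) * (sin a * P) - (cos a * P) * (cos a * Q)) / ((sin a * P)^2 + (cos a * Q)^2)"
    unfolding cot_def Im_divide Re_sin Im_sin Re_cos Im_cos P_def Q_def by (simp add: algebra_simps)
  also have "\<dots> = - (2 * (P * Q)) / (2 * ((sin a)^2 + Q^2))"
    unfolding num den by (subst mult_divide_mult_cancel_left[of 2, symmetric]) simp_all
  also have "2 * ((sin a)^2 + Q^2) = cosh (2 * b) - cos (2 * a)"
    using PQ sin_cos_squared_add[of a] unfolding cosh cos_double by (simp add: algebra_simps)
  finally show ?thesis unfolding sinh by (simp only: mult.assoc)
qed

lemma sinh_div_cosh_minus_cos_sums:
  fixes u w :: real
  assumes u: "u > 0"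
  shows "(\<lambda>k. 2 * u / ((w + 2 * pi * real k)^2 + u^2) + 2 * u / ((2 * pi * (real k + 1) - w)^2 + u^2))
           sums (sinh u / (cosh u - cos w))"
proof -
  define z where "z = Complex (w / (2 * pi)) (u / (2 * pi))"
  have "Im z \<noteq> 0" using u by (simp add: z_def)
  hence z: "z \<notin> \<int>" by (auto elim: Ints_cases)
  have pi_z: "of_real pi * z = Complex (w / 2) (u / 2)"
    by (simp add: z_def complex_eq_iff)
  have Im_term: "Im (inverse (1 - z + of_nat k) - inverse (z + of_nat k)) =
      pi * (2 * u / ((w + 2 * pi * real k)^2 + u^2) + 2 * u / ((2 * pi * (real k + 1) - w)^2 + u^2))"
    for k
  proof -
    have "(w + 2 * pi * real k)^2 + u^2 > 0" "(2 * pi * (real k + 1) - w)^2 + u^2 > 0"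
      using u by (simp_all add: add_nonneg_pos)
    hence "(u / (2 * pi)) / ((1 - w / (2 * pi) + real k)^2 + (u / (2 * pi))^2) =
          pi * (2 * u / ((2 * pi * (real k + 1) - w)^2 + u^2))"
      "(u / (2 * pi)) / ((w / (2 * pi) + real k)^2 + (u / (2 * pi))^2) =
          pi * (2 * u / ((w + 2 * pi * real k)^2 + u^2))"
      by (simp_all add: field_simps power2_eq_square)
    moreover have "Im (inverse (1 - z + of_nat k)) =
        (u / (2 * pi)) / ((1 - w / (2 * pi) + real k)^2 + (u / (2 * pi))^2)"
      "Im (inverse (z + of_nat k)) = - (u / (2 * pi)) / ((w / (2 * pi) + real k)^2 + (u / (2 * pi))^2)"
      by (simp_all add: z_def Im_inverse)
    ultimately show ?thesis by (simp add: algebra_simps)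
  qed
  from sums_Im[OF cot_partial_fractions_sums[OF z]]
  have "(\<lambda>k. Im (inverse (1 - z + of_nat k) - inverse (z + of_nat k))) sums
      (pi * (sinh u / (cosh u - cos w)))"
    unfolding pi_z using Im_cot_Complex[of "w / 2" "u / 2"] by simp
  from sums_mult[OF this, of "1 / pi"] show ?thesis
    unfolding Im_term by simp
qed

lemma sinh_real_ge_self: "x \<ge> 0 \<Longrightarrow> x \<le> sinh (x :: real)"
  using DERIV_nonneg_imp_nondecreasing[of 0 x "\<lambda>x. sinh x - x"]
  by (force intro!: derivative_eq_intros simp: cosh_real_ge_1)

lemma cosh_real_ge_1_plus_half_square: "1 + x^2 / 2 \<le> cosh (x :: real)"
proof -
  have "1 + x^2 / 2 \<le> cosh x" if "x \<ge> 0" for x :: real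
    using DERIV_nonneg_imp_nondecreasing[of 0 x "\<lambda>x. cosh x - 1 - x^2 / 2"] that
    by (force intro!: derivative_eq_intros simp: sinh_real_ge_self)
  from this[of "\<bar>x\<bar>"] show ?thesis by simp
qed

definition half_int :: "nat \<Rightarrow> real" where
  "half_int n = real n + 1/2"

lemma half_int_pos: "half_int n > 0"
  by (simp add: half_int_def)

lemma summable_inverse_half_int_squared: "summable (\<lambda>n. 1 / (half_int n)^2)"
proof (rule summable_comparison_test')
  have "summable (\<lambda>n. inverse (real (Suc n) ^ 2))"
    using inverse_power_summable[of 2, where 'a=real] by (subst summable_Suc_iff) simp
  thus "summable (\<lambda>n. 4 * inverse (real (Suc n) ^ 2))" by (rule summable_mult)
  fix n
  have "(real (Suc n))^2 \<le> (2 * half_int n)^2" by (intro power_mono) (auto simp: half_int_def)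
  hence "4 / (2 * half_int n)^2 \<le> 4 / (real (Suc n))^2"
    using half_int_pos[of n] by (intro divide_left_mono) auto
  moreover have "4 / (2 * half_int n)^2 = 1 / (half_int n)^2"
    by (simp add: power2_eq_square)
  ultimately show "norm (1 / (half_int n)^2) \<le> 4 * inverse (real (Suc n) ^ 2)"
    by (simp add: field_simps)
qed

lemma infsum_eq_suminf_real:
  fixes f :: "nat \<Rightarrow> real"
  assumes "summable (\<lambda>n. norm (f n))"
  shows "infsum f UNIV = suminf f"
  using norm_summable_imp_has_sum[OF assms summable_sums[OF summable_norm_cancel[OF assms]]]
  by (rule infsumI)

lemma summable_on_product_nonneg:
  fixes b b' :: "nat \<Rightarrow> real"
  assumes "summable b" "summable b'" "\<And>n. b n \<ge> 0" "\<And>m. b' m \<ge> 0"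
  shows "(\<lambda>(n, m). b n * b' m) summable_on UNIV \<times> UNIV"
proof -
  have "infsum (\<lambda>m. norm (b n * b' m)) UNIV = b n * infsum b' UNIV" for n
    using assms(3,4) by (simp add: abs_mult infsum_cmult_right')
  hence "(\<lambda>x. norm ((\<lambda>(n, m). b n * b' m) x)) summable_on Sigma UNIV (\<lambda>_. UNIV)"
    using assms unfolding Infinite_Sum.abs_summable_on_Sigma_iff
    by (auto intro!: norm_summable_imp_summable_on summable_mult summable_mult2 simp: abs_mult)
  thus ?thesis by (simp add: abs_summable_summable)
qed

lemma suminf_suminf_eq_infsum:
  fixes f :: "nat \<Rightarrow> nat \<Rightarrow> real"
  assumes "\<And>n m. \<bar>f n m\<bar> \<le> b n * b' m" and "summable b" "summable b'"
    and "\<And>n. b n \<ge> 0" "\<And>m. b' m \<ge> 0"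
  shows "(\<Sum>n. \<Sum>m. f n m) = infsum (\<lambda>n. infsum (\<lambda>m. f n m) UNIV) UNIV"
proof -
  have row: "summable (\<lambda>m. \<bar>f n m\<bar>)" for n
    by (rule summable_comparison_test'[of "\<lambda>m. b n * b' m"]) (use assms in \<open>auto intro: summable_mult\<close>)
  have "\<bar>\<Sum>m. f n m\<bar> \<le> b n * suminf b'" for n
  proof -
    have "\<bar>\<Sum>m. f n m\<bar> \<le> (\<Sum>m. \<bar>f n m\<bar>)" using summable_rabs[OF row] .
    also have "\<dots> \<le> (\<Sum>m. b n * b' m)"
      by (rule suminf_le[OF _ row]) (use assms in \<open>auto intro: summable_mult\<close>)
    finally show ?thesis using suminf_mult[OF \<open>summable b'\<close>] by simp
  qed
  hence "summable (\<lambda>n. \<bar>\<Sum>m. f n m\<bar>)"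
    by (intro summable_comparison_test'[OF summable_mult2[OF \<open>summable b\<close>]]) auto
  with row show ?thesis by (simp add: infsum_eq_suminf_real)
qed

lemma suminf_swap_dominated:
  fixes f :: "nat \<Rightarrow> nat \<Rightarrow> real"
  assumes "\<And>n m. \<bar>f n m\<bar> \<le> b n * b' m" and "summable b" "summable b'"
    and "\<And>n. b n \<ge> 0" "\<And>m. b' m \<ge> 0"
  shows "(\<Sum>n. \<Sum>m. f n m) = (\<Sum>m. \<Sum>n. f n m)"
proof -
  have "(\<lambda>(n, m). f n m) summable_on UNIV \<times> UNIV"
    by (rule abs_summable_summable,
        rule Infinite_Sum.abs_summable_on_comparison_test'[OF summable_on_product_nonneg[of b b']])
       (use assms in \<open>auto simp: abs_mult\<close>)
  hence "infsum (\<lambda>n. infsum (\<lambda>m. f n m) UNIV) UNIV = infsum (\<lambda>m. infsum (\<lambda>n. f n m) UNIV) UNIV"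
    by (rule infsum_swap_banach)
  moreover have "(\<Sum>m. \<Sum>n. f n m) = infsum (\<lambda>m. infsum (\<lambda>n. f n m) UNIV) UNIV"
    by (rule suminf_suminf_eq_infsum[of _ b' b]) (use assms in \<open>auto simp: mult.commute\<close>)
  ultimately show ?thesis
    using suminf_suminf_eq_infsum[OF assms] by simp
qed

lemma has_real_derivative_suminf_on_pos:
  fixes f f' :: "nat \<Rightarrow> real \<Rightarrow> real"
  assumes deriv: "\<And>n t. t > 0 \<Longrightarrow> (f n has_real_derivative f' n t) (at t)"
    and bound: "\<And>n t. t > 0 \<Longrightarrow> \<bar>f' n t\<bar> \<le> M n" and "summable M"
    and "summable (\<lambda>n. f n 1)" and "t > 0"
  shows "((\<lambda>t. \<Sum>n. f n t) has_real_derivative (\<Sum>n. f' n t)) (at t)"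
proof (rule has_field_derivative_series'(2)[of "{0<..}"])
  show "uniformly_convergent_on {0<..} (\<lambda>n t. \<Sum>i<n. f' i t)"
    by (rule Weierstrass_m_test'[OF _ \<open>summable M\<close>]) (use bound in auto)
  show "(f n has_field_derivative f' n t) (at t within {0<..})" if "t \<in> {0<..}" for n t
    using deriv[of t n] that by (auto intro: has_field_derivative_at_within)
qed (use assms in \<open>auto simp: interior_open\<close>)

lemma zero_if_second_derivative_zero_and_tendsto_zero:
  fixes D D' :: "real \<Rightarrow> real"
  assumes D: "\<And>t. t > 0 \<Longrightarrow> (D has_real_derivative D' t) (at t)"
    and D': "\<And>t. t > 0 \<Longrightarrow> (D' has_real_derivative 0) (at t)"
    and lim: "(D \<longlongrightarrow> 0) at_top" and "t > 0"
  shows "D t = 0"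
proof -
  obtain k where k: "\<And>t. t > 0 \<Longrightarrow> D' t = k"
    using has_field_derivative_zero_constant[of "{0<..}" D'] D'
    by (metis convex_real_interval(3) greaterThan_iff has_field_derivative_at_within)
  have "((\<lambda>t. D t - k * t) has_real_derivative 0) (at t within {0<..})" if "t > 0" for t
  proof -
    have "((\<lambda>t. D t - k * t) has_real_derivative D' t - k * 1) (at t)"
      by (intro DERIV_diff DERIV_cmult DERIV_ident D that)
    thus ?thesis using k[OF that] by (simp add: has_field_derivative_at_within)
  qed
  then obtain b where b: "\<And>t. t > 0 \<Longrightarrow> D t - k * t = b"
    using has_field_derivative_zero_constant[of "{0<..}" "\<lambda>t. D t - k * t"]
    by (metis convex_real_interval(3) greaterThan_iff)
  have ev: "eventually (\<lambda>t. D t = k * t + b) at_top"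
    using eventually_gt_at_top[of "0::real"] by eventually_elim (metis b diff_add_cancel add.commute)
  have "((\<lambda>t. D t / t) \<longlongrightarrow> 0) at_top"
    by (rule tendsto_divide_0[OF lim filterlim_at_top_imp_at_infinity[OF filterlim_ident]])
  moreover have "eventually (\<lambda>t. D t / t = k + b / t) at_top"
    using eventually_gt_at_top[of "0::real"] ev by eventually_elim (simp add: field_simps)
  ultimately have "((\<lambda>t. k + b / t) \<longlongrightarrow> 0) at_top"
    by (rule Lim_transform_eventually)
  moreover have "((\<lambda>t. k + b / t) \<longlongrightarrow> k + 0) at_top"
    by (intro tendsto_add tendsto_const tendsto_divide_0[OF tendsto_const]
          filterlim_at_top_imp_at_infinity filterlim_ident)
  ultimately have "k = 0" using tendsto_unique[OF trivial_limit_at_top_linorder] by force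
  with Lim_transform_eventually[OF lim ev] have "b = 0"
    by (simp add: tendsto_const_iff)
  with b[OF \<open>t > 0\<close>] \<open>k = 0\<close> show ?thesis by simp
qed

lemma has_real_derivative_ln_cosh_ratio:
  assumes "(u has_real_derivative u') (at t)" "cosh (u t) - K > 0" "cosh (u t) + K > 0"
  shows "((\<lambda>t. ln (cosh (u t) - K) - ln (cosh (u t) + K)) has_real_derivative
           u' * sinh (u t) * (1 / (cosh (u t) - K) - 1 / (cosh (u t) + K))) (at t)"
proof -
  have "((\<lambda>t. ln (cosh (u t) - K) - ln (cosh (u t) + K)) has_real_derivative
          (sinh (u t) * u' - 0) / (cosh (u t) - K) - (sinh (u t) * u' + 0) / (cosh (u t) + K)) (at t)"
    using assms by (auto intro!: derivative_eq_intros)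
  thus ?thesis by (simp add: field_simps)
qed

text \<open>In the locale, \<open>a\<close>, \<open>s\<close>, \<open>c\<close> stand for \<open>\<alpha>\<close>, \<open>sin \<theta>\<close>, \<open>cos \<theta>\<close>;
  the index \<open>N\<close> is \<open>n + 1/2\<close> and the variable \<open>t\<close> is \<open>y^2\<close>.\<close>

locale scaled_phase =
  fixes a s c :: real
  assumes a_pos: "a > 0" and c_pos: "c > 0" and sin_cos: "s^2 + c^2 = 1"
begin

definition kappa :: real where
  "kappa = 1 - \<bar>s\<bar>"

lemma kappa_pos: "kappa > 0"
proof -
  have "s^2 < 1" using sin_cos c_pos by (smt (verit) zero_less_power)
  thus ?thesis by (simp add: kappa_def abs_square_less_1)
qed

definition U :: "real \<Rightarrow> real \<Rightarrow> real" where
  "U N t = pi * c * sqrt (N^2 * a^2 + a * t)"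

definition dU :: "real \<Rightarrow> real \<Rightarrow> real" where
  "dU N t = pi * c * a / (2 * sqrt (N^2 * a^2 + a * t))"

definition S :: "real \<Rightarrow> real" where
  "S N = sin (pi * N * a * s)"

definition ell :: "real \<Rightarrow> real \<Rightarrow> real" where
  "ell N t = ln (cosh (U N t) - S N) - ln (cosh (U N t) + S N)"

definition ell1 :: "real \<Rightarrow> real \<Rightarrow> real" where
  "ell1 N t = dU N t * sinh (U N t) * (1 / (cosh (U N t) - S N) - 1 / (cosh (U N t) + S N))"

lemma U_ge:
  assumes "N > 0" "t \<ge> 0"
  shows "pi * c * a * N \<le> U N t"
proof -
  have "a * N \<le> sqrt (N^2 * a^2 + a * t)"
    using assms a_pos by (intro real_le_rsqrt) (simp add: power_mult_distrib)
  hence "(pi * c) * (a * N) \<le> (pi * c) * sqrt (N^2 * a^2 + a * t)"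
    using c_pos by (intro mult_left_mono) auto
  thus ?thesis unfolding U_def by (simp add: mult.assoc)
qed

lemma U_pos: "N > 0 \<Longrightarrow> t \<ge> 0 \<Longrightarrow> U N t > 0"
  using U_ge[of N t] a_pos c_pos by (smt (verit) mult_pos_pos pi_gt_zero)

lemma U_squared: "t \<ge> 0 \<Longrightarrow> (U N t)^2 = pi^2 * c^2 * (N^2 * a^2 + a * t)"
  unfolding U_def using a_pos by (simp add: power_mult_distrib)

lemma U_has_real_derivative:
  assumes "N > 0" "t > 0"
  shows "((\<lambda>t. U N t) has_real_derivative dU N t) (at t)"
proof -
  have "N^2 * a^2 + a * t > 0" using assms a_pos by (simp add: add_pos_pos)
  thus ?thesis unfolding U_def[abs_def] dU_def
    by (auto intro!: derivative_eq_intros simp: field_simps)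
qed

lemma abs_S_le_1: "\<bar>S N\<bar> \<le> 1"
  by (simp add: S_def)

lemma cosh_U_minus_1_ge:
  assumes "N > 0" "t \<ge> 0"
  shows "cosh (U N t) - 1 \<ge> (U N t)^2 / 2" "cosh (U N t) - 1 > 0"
proof -
  show "cosh (U N t) - 1 \<ge> (U N t)^2 / 2"
    using cosh_real_ge_1_plus_half_square[of "U N t"] by simp
  moreover have "(U N t)^2 / 2 > 0" using U_pos[OF assms] by simp
  ultimately show "cosh (U N t) - 1 > 0" by linarith
qed

lemma cosh_U_minus_plus_S_pos:
  assumes "N > 0" "t \<ge> 0"
  shows "cosh (U N t) - S N > 0" "cosh (U N t) + S N > 0"
  using cosh_U_minus_1_ge(2)[OF assms] abs_S_le_1[of N] by linarith+

lemma ell_has_real_derivative: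
  assumes "N > 0" "t > 0"
  shows "((\<lambda>t. ell N t) has_real_derivative ell1 N t) (at t)"
  unfolding ell_def[abs_def] ell1_def
  using assms cosh_U_minus_plus_S_pos[of N t]
  by (intro has_real_derivative_ln_cosh_ratio U_has_real_derivative) auto

lemma abs_ell_le:
  assumes "N > 0" "t \<ge> 0"
  shows "\<bar>ell N t\<bar> \<le> 4 / (U N t)^2"
proof -
  define C where "C = cosh (U N t)"
  have C: "C - 1 \<ge> (U N t)^2 / 2" "C - 1 > 0"
    using cosh_U_minus_1_ge[OF assms] by (auto simp: C_def)
  have pos: "C - S N > 0" "C + S N > 0"
    using cosh_U_minus_plus_S_pos[OF assms] by (auto simp: C_def)
  have S: "\<bar>S N\<bar> \<le> 1" by (rule abs_S_le_1)
  have "ln (C - S N) - ln (C + S N) \<le> (C - S N) / (C + S N) - 1"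
    using pos ln_le_minus_one[of "(C - S N) / (C + S N)"] by (simp add: ln_div)
  also have "\<dots> = - 2 * S N / (C + S N)" using pos by (simp add: field_simps)
  also have "\<dots> \<le> 2 / (C + S N)" using S pos by (intro divide_right_mono) auto
  also have "\<dots> \<le> 2 / (C - 1)" using S C by (intro divide_left_mono) auto
  finally have upper: "ln (C - S N) - ln (C + S N) \<le> 2 / (C - 1)" .
  have "ln (C + S N) - ln (C - S N) \<le> (C + S N) / (C - S N) - 1"
    using pos ln_le_minus_one[of "(C + S N) / (C - S N)"] by (simp add: ln_div)
  also have "\<dots> = 2 * S N / (C - S N)" using pos by (simp add: field_simps)
  also have "\<dots> \<le> 2 / (C - S N)" using S pos by (intro divide_right_mono) auto
  also have "\<dots> \<le> 2 / (C - 1)" using S C by (intro divide_left_mono) auto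
  finally have lower: "ln (C + S N) - ln (C - S N) \<le> 2 / (C - 1)" .
  have "2 / (C - 1) \<le> 4 / (U N t)^2"
    using C U_pos[OF assms] by (simp add: field_simps)
  thus ?thesis using upper lower unfolding ell_def C_def[symmetric] by linarith
qed

lemma abs_ell_le_inverse_square:
  assumes "N > 0" "t \<ge> 0"
  shows "\<bar>ell N t\<bar> \<le> 4 / (pi * c * a)^2 * (1 / N^2)"
proof -
  have pos: "pi * c * a * N > 0" using a_pos c_pos assms by simp
  hence "(pi * c * a * N)^2 \<le> (U N t)^2" using U_ge[OF assms] by (intro power_mono) auto
  hence "4 / (U N t)^2 \<le> 4 / (pi * c * a * N)^2" using pos by (intro frac_le) auto
  also have "\<dots> = 4 / (pi * c * a)^2 * (1 / N^2)" by (simp add: power_mult_distrib)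
  finally show ?thesis using abs_ell_le[OF assms] by linarith
qed

lemma abs_ell1_le:
  assumes "N > 0" "t \<ge> 0"
  shows "\<bar>ell1 N t\<bar> \<le> 1 / (a * N^2)"
proof -
  define u where "u = U N t"
  define C where "C = cosh u"
  have u: "u > 0" using U_pos[OF assms] by (simp add: u_def)
  have sinh_u: "sinh u \<ge> u" using sinh_real_ge_self[of u] u by simp
  have S: "(S N)^2 \<le> 1" using abs_S_le_1[of N] by (simp add: abs_square_le_1)
  have den: "(sinh u)^2 \<le> C^2 - (S N)^2"
    using S by (simp add: C_def cosh_square_eq)
  have pos: "C - S N > 0" "C + S N > 0"
    using cosh_U_minus_plus_S_pos[OF assms] by (auto simp: C_def u_def)
  have sqrt: "sqrt (N^2 * a^2 + a * t) = u / (pi * c)"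
    using c_pos by (simp add: u_def U_def)
  have "ell1 N t = pi^2 * c^2 * a / (2 * u) * sinh u * (2 * S N / (C^2 - (S N)^2))"
    unfolding ell1_def dU_def sqrt u_def[symmetric] C_def[symmetric]
    using pos u c_pos by (simp add: field_simps power2_eq_square)
  moreover have "C^2 - (S N)^2 > 0"
    using den sinh_u u by (smt (verit) zero_less_power)
  ultimately have "\<bar>ell1 N t\<bar> = pi^2 * c^2 * a / (2 * u) * sinh u * (2 * \<bar>S N\<bar> / (C^2 - (S N)^2))"
    using u sinh_u a_pos by (simp add: abs_mult abs_divide)
  also have "\<dots> \<le> pi^2 * c^2 * a / (2 * u) * sinh u * (2 / (sinh u)^2)"
    using abs_S_le_1[of N] den u sinh_u a_pos
    by (intro mult_left_mono frac_le) auto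
  also have "\<dots> = pi^2 * c^2 * a / (u * sinh u)"
    using sinh_u u by (simp add: field_simps power2_eq_square)
  also have "\<dots> \<le> pi^2 * c^2 * a / ((pi * c * a * N) * (pi * c * a * N))"
    using U_ge[OF assms] sinh_u u a_pos c_pos assms
    by (intro divide_left_mono mult_mono) (auto simp: u_def)
  also have "\<dots> = 1 / (a * N^2)"
    using a_pos c_pos by (simp add: field_simps power2_eq_square)
  finally show ?thesis .
qed

text \<open>The quadratic form arises through
  \<open>pi^2 * a * qf \<sigma> t N M = pi^2 * (M + \<sigma> * N * a * s)^2 + (U N t)^2\<close>,
  see \<open>dU_mult_partial_fraction_eq\<close>.\<close>

definition qf :: "real \<Rightarrow> real \<Rightarrow> real \<Rightarrow> real \<Rightarrow> real" where
  "qf \<sigma> t N M = N^2 * a + 2 * \<sigma> * N * M * s + M^2 / a + c^2 * t"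

lemma kappa_mult_le_qf:
  assumes "\<bar>\<sigma>\<bar> = 1" "t \<ge> 0"
  shows "kappa * (N^2 * a + M^2 / a) \<le> qf \<sigma> t N M"
proof -
  have "0 \<le> (\<bar>N\<bar> * a - \<bar>M\<bar>)^2 / a" using a_pos by simp
  also have "\<dots> = N^2 * a + M^2 / a - 2 * \<bar>N * M\<bar>"
    using a_pos by (simp add: power2_eq_square field_simps abs_mult)
  finally have "2 * \<bar>N * M\<bar> * \<bar>s\<bar> \<le> (N^2 * a + M^2 / a) * \<bar>s\<bar>"
    by (intro mult_right_mono) auto
  moreover have "\<bar>2 * \<sigma> * N * M * s\<bar> = 2 * \<bar>N * M\<bar> * \<bar>s\<bar>"
    using assms(1) by (simp add: abs_mult)
  moreover have "c^2 * t \<ge> 0" using assms(2) by simp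
  moreover have "kappa * (N^2 * a + M^2 / a) = (N^2 * a + M^2 / a) - (N^2 * a + M^2 / a) * \<bar>s\<bar>"
    by (simp add: kappa_def algebra_simps add_divide_distrib[symmetric])
  moreover have "- \<bar>2 * \<sigma> * N * M * s\<bar> \<le> 2 * \<sigma> * N * M * s" by simp
  ultimately show ?thesis unfolding qf_def by linarith
qed

lemma qf_ge_mult:
  assumes "\<bar>\<sigma>\<bar> = 1" "t \<ge> 0" "N > 0" "M > 0"
  shows "2 * kappa * N * M \<le> qf \<sigma> t N M"
proof -
  have "0 \<le> (N * a - M)^2 / a" using a_pos by simp
  also have "\<dots> = N^2 * a + M^2 / a - 2 * (N * M)"
    using a_pos by (simp add: power2_eq_square field_simps)
  finally have "kappa * (2 * (N * M)) \<le> kappa * (N^2 * a + M^2 / a)"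
    using kappa_pos by (intro mult_left_mono) auto
  with kappa_mult_le_qf[OF assms(1,2), of N M] show ?thesis by simp
qed

lemma qf_ge_square:
  assumes "\<bar>\<sigma>\<bar> = 1" "t \<ge> 0"
  shows "kappa * M^2 / a \<le> qf \<sigma> t N M"
proof -
  have "kappa * M^2 / a \<le> kappa * (N^2 * a + M^2 / a)"
    using kappa_pos a_pos by (simp add: field_simps)
  with kappa_mult_le_qf[OF assms, of N M] show ?thesis by linarith
qed

lemma qf_pos:
  assumes "\<bar>\<sigma>\<bar> = 1" "t \<ge> 0" "N > 0" "M > 0"
  shows "qf \<sigma> t N M > 0"
  using qf_ge_mult[OF assms] kappa_pos assms(3,4) by (smt (verit) mult_pos_pos)

lemma inverse_qf_le:
  assumes "\<bar>\<sigma>\<bar> = 1" "t \<ge> 0" "N > 0" "M > 0"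
  shows "1 / qf \<sigma> t N M \<le> a / kappa * (1 / M^2)"
proof -
  have "1 / qf \<sigma> t N M \<le> 1 / (kappa * M^2 / a)"
    using qf_ge_square[OF assms(1,2), of M N] kappa_pos a_pos assms(4) by (intro frac_le) auto
  thus ?thesis by (simp add: field_simps)
qed

lemma inverse_qf_squared_le:
  assumes "\<bar>\<sigma>\<bar> = 1" "t \<ge> 0" "N > 0" "M > 0"
  shows "1 / (qf \<sigma> t N M)^2 \<le> 1 / (4 * kappa^2) * (1 / N^2) * (1 / M^2)"
proof -
  have pos: "2 * kappa * N * M > 0" using kappa_pos assms by simp
  hence "(2 * kappa * N * M)^2 \<le> (qf \<sigma> t N M)^2"
    using qf_ge_mult[OF assms] by (intro power_mono) auto
  hence "1 / (qf \<sigma> t N M)^2 \<le> 1 / (2 * kappa * N * M)^2"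
    using pos by (intro frac_le) auto
  thus ?thesis by (simp add: field_simps power2_eq_square)
qed

lemma inverse_qf_has_real_derivative:
  assumes "qf \<sigma> t N M \<noteq> 0"
  shows "((\<lambda>t. 1 / qf \<sigma> t N M) has_real_derivative - (c^2) / (qf \<sigma> t N M)^2) (at t)"
  using assms unfolding qf_def
  by (auto intro!: derivative_eq_intros simp: power2_eq_square)

lemma dU_mult_partial_fraction_eq:
  assumes t: "t \<ge> 0" and N: "N > 0" and \<sigma>: "\<bar>\<sigma>\<bar> = 1" and M: "M > 0"
    and v: "v^2 = pi^2 * (M + \<sigma> * N * a * s)^2"
  shows "dU N t * (2 * U N t / (v^2 + (U N t)^2)) = c^2 / qf \<sigma> t N M"
proof -
  have \<sigma>2: "\<sigma>^2 = 1" using \<sigma> by (simp add: abs_square_eq_1)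
  have "v^2 + (U N t)^2 = pi^2 * (M^2 + 2 * \<sigma> * N * M * a * s + N^2 * a^2 * (\<sigma>^2 * s^2 + c^2) + c^2 * a * t)"
    unfolding v U_squared[OF t] by (simp add: algebra_simps power2_eq_square)
  also have "\<dots> = pi^2 * a * qf \<sigma> t N M"
    using \<sigma>2 sin_cos a_pos unfolding qf_def by (simp add: field_simps power2_eq_square)
  finally have den: "v^2 + (U N t)^2 = pi^2 * a * qf \<sigma> t N M" .
  have "N^2 * a^2 + a * t > 0" using a_pos N t by (simp add: add_pos_nonneg)
  thus ?thesis
    unfolding den unfolding dU_def U_def using qf_pos[OF \<sigma> t N M] a_pos c_pos
    by (simp add: field_simps power2_eq_square)
qed

lemma ell1_half_sums:
  assumes t: "t \<ge> 0" and N: "N > 0" and \<sigma>: "\<bar>\<sigma>\<bar> = 1"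
  shows "(\<lambda>k. c^2 / qf (-\<sigma>) t N (half_int (2 * k)) + c^2 / qf \<sigma> t N (half_int (2 * k + 1)))
           sums (dU N t * (sinh (U N t) / (cosh (U N t) - \<sigma> * S N)))"
proof -
  define w where "w = pi / 2 - \<sigma> * pi * N * a * s"
  have "\<sigma> = 1 \<or> \<sigma> = -1" using \<sigma> by linarith
  hence "cos w = \<sigma> * S N"
    by (auto simp: w_def S_def cos_diff)
  moreover have "dU N t * (2 * U N t / ((w + 2 * pi * real k)^2 + (U N t)^2)
                          + 2 * U N t / ((2 * pi * (real k + 1) - w)^2 + (U N t)^2))
      = c^2 / qf (-\<sigma>) t N (half_int (2 * k)) + c^2 / qf \<sigma> t N (half_int (2 * k + 1))" for k
  proof -
    have "dU N t * (2 * U N t / ((w + 2 * pi * real k)^2 + (U N t)^2)) =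
        c^2 / qf (-\<sigma>) t N (half_int (2 * k))"
      using \<sigma> by (intro dU_mult_partial_fraction_eq[OF t N _ half_int_pos])
        (simp_all add: half_int_def w_def power_mult_distrib[symmetric] algebra_simps)
    moreover have "dU N t * (2 * U N t / ((2 * pi * (real k + 1) - w)^2 + (U N t)^2)) =
        c^2 / qf \<sigma> t N (half_int (2 * k + 1))"
      using \<sigma> by (intro dU_mult_partial_fraction_eq[OF t N _ half_int_pos])
        (simp_all add: half_int_def w_def power_mult_distrib[symmetric] algebra_simps)
    ultimately show ?thesis by (simp only: distrib_left)
  qed
  ultimately show ?thesis
    using sums_mult[OF sinh_div_cosh_minus_cos_sums[OF U_pos[OF N t], of w], of "dU N t"] by simp
qed

definition ell1_term :: "real \<Rightarrow> real \<Rightarrow> nat \<Rightarrow> real" where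
  "ell1_term N t m = (-1)^m * c^2 * (1 / qf (-1) t N (half_int m) - 1 / qf 1 t N (half_int m))"

lemma abs_ell1_term_le:
  assumes "N > 0" "t \<ge> 0"
  shows "\<bar>ell1_term N t m\<bar> \<le> 2 * c^2 * a / kappa * (1 / (half_int m)^2)"
proof -
  have "0 < 1 / qf (-1) t N (half_int m)" "0 < 1 / qf 1 t N (half_int m)"
    using qf_pos[OF _ assms(2,1) half_int_pos] by auto
  moreover have "1 / qf (-1) t N (half_int m) \<le> a / kappa * (1 / (half_int m)^2)"
    "1 / qf 1 t N (half_int m) \<le> a / kappa * (1 / (half_int m)^2)"
    using inverse_qf_le[OF _ assms(2,1) half_int_pos] by auto
  ultimately have "\<bar>1 / qf (-1) t N (half_int m) - 1 / qf 1 t N (half_int m)\<bar>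
      \<le> 2 * (a / kappa * (1 / (half_int m)^2))"
    by linarith
  hence "c^2 * \<bar>1 / qf (-1) t N (half_int m) - 1 / qf 1 t N (half_int m)\<bar>
      \<le> c^2 * (2 * (a / kappa * (1 / (half_int m)^2)))"
    by (intro mult_left_mono) auto
  thus ?thesis by (simp add: ell1_term_def abs_mult mult_ac)
qed

lemma summable_ell1_term:
  assumes "N > 0" "t \<ge> 0"
  shows "summable (ell1_term N t)"
  by (rule summable_comparison_test'[OF summable_mult[OF summable_inverse_half_int_squared,
        of "2 * c^2 * a / kappa"]])
     (use abs_ell1_term_le[OF assms] in simp)

lemma ell1_term_sums:
  assumes N: "N > 0" and t: "t \<ge> 0"
  shows "ell1_term N t sums ell1 N t"
proof -
  have pair: "(\<Sum>m\<in>{k * 2..<k * 2 + 2}. ell1_term N t m) =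
      (c^2 / qf (-1) t N (half_int (2 * k)) + c^2 / qf 1 t N (half_int (2 * k + 1))) -
      (c^2 / qf 1 t N (half_int (2 * k)) + c^2 / qf (-1) t N (half_int (2 * k + 1)))" for k
  proof -
    have "{k * 2..<k * 2 + 2} = {2 * k, 2 * k + 1}" by auto
    thus ?thesis by (simp add: ell1_term_def right_diff_distrib)
  qed
  have "dU N t * (sinh (U N t) / (cosh (U N t) - S N)) -
        dU N t * (sinh (U N t) / (cosh (U N t) + S N)) = ell1 N t"
    unfolding ell1_def by (simp add: diff_divide_distrib right_diff_distrib)
  with sums_diff[OF ell1_half_sums[OF t N, of 1] ell1_half_sums[OF t N, of "-1"]]
  have "(\<lambda>k. \<Sum>m\<in>{k * 2..<k * 2 + 2}. ell1_term N t m) sums ell1 N t"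
    unfolding pair by simp
  moreover have "(\<lambda>k. \<Sum>m\<in>{k * 2..<k * 2 + 2}. ell1_term N t m) sums suminf (ell1_term N t)"
    using sums_group[OF summable_sums[OF summable_ell1_term[OF N t]], of 2] by simp
  ultimately have "ell1 N t = suminf (ell1_term N t)" by (rule sums_unique2)
  thus ?thesis using summable_ell1_term[OF N t] by (simp add: summable_sums)
qed

definition ell2_term :: "real \<Rightarrow> real \<Rightarrow> nat \<Rightarrow> real" where
  "ell2_term N t m =
     (-1)^m * c^4 * (1 / (qf 1 t N (half_int m))^2 - 1 / (qf (-1) t N (half_int m))^2)"

definition ell2 :: "real \<Rightarrow> real \<Rightarrow> real" where
  "ell2 N t = (\<Sum>m. ell2_term N t m)"

lemma abs_ell2_term_le:
  assumes "N > 0" "t \<ge> 0"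
  shows "\<bar>ell2_term N t m\<bar> \<le> c^4 / (2 * kappa^2) * (1 / N^2) * (1 / (half_int m)^2)"
proof -
  define B where "B = 1 / (4 * kappa^2) * (1 / N^2) * (1 / (half_int m)^2)"
  define x y where "x = 1 / (qf 1 t N (half_int m))^2" and "y = 1 / (qf (-1) t N (half_int m))^2"
  have "x \<le> B" "y \<le> B"
    unfolding x_def y_def B_def using inverse_qf_squared_le[OF _ assms(2,1) half_int_pos] by auto
  moreover have "x \<ge> 0" "y \<ge> 0" by (simp_all add: x_def y_def)
  ultimately have "c^4 * \<bar>x - y\<bar> \<le> c^4 * (2 * B)"
    by (intro mult_left_mono) auto
  thus ?thesis by (simp add: ell2_term_def x_def y_def B_def abs_mult mult_ac)
qed

lemma summable_ell2_term:
  assumes "N > 0" "t \<ge> 0"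
  shows "summable (ell2_term N t)"
  by (rule summable_comparison_test'[OF summable_mult[OF summable_inverse_half_int_squared,
        of "c^4 / (2 * kappa^2) * (1 / N^2)"]])
     (use abs_ell2_term_le[OF assms] in simp)

lemma ell1_term_has_real_derivative:
  assumes "N > 0" "t > 0"
  shows "((\<lambda>t. ell1_term N t m) has_real_derivative ell2_term N t m) (at t)"
proof -
  have "qf 1 t N (half_int m) \<noteq> 0" "qf (-1) t N (half_int m) \<noteq> 0"
    using qf_pos[OF _ _ assms(1) half_int_pos] assms(2) by (metis abs_1 abs_minus less_imp_neq less_le)+
  hence "((\<lambda>t. ell1_term N t m) has_real_derivative (-1)^m * c^2 *
      (- (c^2) / (qf (-1) t N (half_int m))^2 - - (c^2) / (qf 1 t N (half_int m))^2)) (at t)"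
    unfolding ell1_term_def[abs_def]
    by (intro DERIV_cmult DERIV_diff inverse_qf_has_real_derivative)
  thus ?thesis
    by (simp add: ell2_term_def algebra_simps power4_eq_xxxx power2_eq_square)
qed

lemma ell1_has_real_derivative:
  assumes "N > 0" "t > 0"
  shows "((\<lambda>t. ell1 N t) has_real_derivative ell2 N t) (at t)"
proof -
  have "((\<lambda>t. \<Sum>m. ell1_term N t m) has_real_derivative (\<Sum>m. ell2_term N t m)) (at t)"
  proof (rule has_real_derivative_suminf_on_pos)
    show "summable (\<lambda>m. c^4 / (2 * kappa^2) * (1 / N^2) * (1 / (half_int m)^2))"
      by (rule summable_mult[OF summable_inverse_half_int_squared])
  qed (use assms abs_ell2_term_le ell1_term_has_real_derivative summable_ell1_term in auto)
  thus ?thesis unfolding ell2_def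
  proof (rule has_field_derivative_transform_within_open[of _ _ _ "{0<..}"])
    show "(\<Sum>m. ell1_term N t' m) = ell1 N t'" if "t' \<in> {0<..}" for t'
      using ell1_term_sums[OF assms(1), of t'] that by (simp add: sums_iff)
  qed (use assms in auto)
qed

lemma abs_ell2_le:
  assumes "N > 0" "t \<ge> 0"
  shows "\<bar>ell2 N t\<bar> \<le> c^4 / (2 * kappa^2) * (\<Sum>m. 1 / (half_int m)^2) * (1 / N^2)"
proof -
  have bound: "summable (\<lambda>m. c^4 / (2 * kappa^2) * (1 / N^2) * (1 / (half_int m)^2))"
    by (intro summable_mult summable_inverse_half_int_squared)
  have "\<bar>ell2 N t\<bar> \<le> (\<Sum>m. \<bar>ell2_term N t m\<bar>)"
    unfolding ell2_def
    by (rule summable_rabs[OF summable_comparison_test'[OF bound]]) (use abs_ell2_term_le[OF assms] in auto)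
  also have "\<dots> \<le> (\<Sum>m. c^4 / (2 * kappa^2) * (1 / N^2) * (1 / (half_int m)^2))"
    by (rule suminf_le[OF _ summable_comparison_test'[OF bound] bound])
       (use abs_ell2_term_le[OF assms] in auto)
  also have "\<dots> = c^4 / (2 * kappa^2) * (1 / N^2) * (\<Sum>m. 1 / (half_int m)^2)"
    by (rule suminf_mult[OF summable_inverse_half_int_squared])
  finally show ?thesis by (simp add: mult_ac)
qed

definition Phi :: "real \<Rightarrow> real" where
  "Phi t = (\<Sum>n. (-1)^n * ell (half_int n) t)"

definition Phi1 :: "real \<Rightarrow> real" where
  "Phi1 t = (\<Sum>n. (-1)^n * ell1 (half_int n) t)"

definition Phi2 :: "real \<Rightarrow> real" where
  "Phi2 t = (\<Sum>n. (-1)^n * ell2 (half_int n) t)"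

lemma summable_Phi:
  assumes "t \<ge> 0"
  shows "summable (\<lambda>n. (-1)^n * ell (half_int n) t)"
  by (rule summable_comparison_test'[OF summable_mult[OF summable_inverse_half_int_squared,
        of "4 / (pi * c * a)^2"]])
     (use abs_ell_le_inverse_square[OF half_int_pos assms] in \<open>simp add: abs_mult\<close>)

lemma summable_Phi1:
  assumes "t \<ge> 0"
  shows "summable (\<lambda>n. (-1)^n * ell1 (half_int n) t)"
  by (rule summable_comparison_test'[OF summable_mult[OF summable_inverse_half_int_squared, of "1 / a"]])
     (use abs_ell1_le[OF half_int_pos assms] in \<open>simp add: abs_mult\<close>)

lemma Phi_has_real_derivative:
  assumes "t > 0"
  shows "(Phi has_real_derivative Phi1 t) (at t)"
  unfolding Phi_def[abs_def] Phi1_def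
proof (rule has_real_derivative_suminf_on_pos)
  show "summable (\<lambda>n. 1 / a * (1 / (half_int n)^2))"
    by (rule summable_mult[OF summable_inverse_half_int_squared])
qed (use assms half_int_pos abs_ell1_le summable_Phi in \<open>auto intro!: DERIV_cmult ell_has_real_derivative
       simp: abs_mult\<close>)

lemma Phi1_has_real_derivative:
  assumes "t > 0"
  shows "(Phi1 has_real_derivative Phi2 t) (at t)"
  unfolding Phi1_def[abs_def] Phi2_def
proof (rule has_real_derivative_suminf_on_pos)
  show "summable (\<lambda>n. c^4 / (2 * kappa^2) * (\<Sum>m. 1 / (half_int m)^2) * (1 / (half_int n)^2))"
    by (rule summable_mult[OF summable_inverse_half_int_squared])
qed (use assms half_int_pos abs_ell2_le summable_Phi1 in \<open>auto intro!: DERIV_cmult ell1_has_real_derivative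
       simp: abs_mult\<close>)

lemma Phi_tendsto_0: "(Phi \<longlongrightarrow> 0) at_top"
proof -
  have ell_lim: "((\<lambda>t. ell N t) \<longlongrightarrow> 0) at_top" if N: "N > 0" for N
  proof (rule Lim_null_comparison)
    show "eventually (\<lambda>t. norm (ell N t) \<le> 4 / (pi^2 * c^2 * (N^2 * a^2 + a * t))) at_top"
      using eventually_ge_at_top[of "0::real"]
      by eventually_elim (use abs_ell_le[OF N] U_squared in simp)
    have "filterlim (\<lambda>t. pi^2 * c^2 * (N^2 * a^2 + a * t)) at_top at_top"
      using a_pos c_pos
      by (intro filterlim_tendsto_pos_mult_at_top[OF tendsto_const] filterlim_tendsto_add_at_top[OF tendsto_const]
            filterlim_tendsto_pos_mult_at_top[OF tendsto_const _ filterlim_ident]) auto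
    thus "((\<lambda>t. 4 / (pi^2 * c^2 * (N^2 * a^2 + a * t))) \<longlongrightarrow> 0) at_top"
      by (rule tendsto_divide_0[OF tendsto_const filterlim_at_top_imp_at_infinity])
  qed
  have bound: "eventually (\<lambda>(n, t). norm ((-1)^n * ell (half_int n) t) \<le>
      4 / (pi * c * a)^2 * (1 / (half_int n)^2)) (at_top \<times>\<^sub>F at_top)"
    using eventually_prodI[OF eventually_True eventually_ge_at_top[of "0::real"]]
    by (rule eventually_mono) (use abs_ell_le_inverse_square half_int_pos in \<open>auto simp: abs_mult\<close>)
  have "((\<lambda>t. (-1)^n * ell (half_int n) t) \<longlongrightarrow> 0) at_top" for n
    using tendsto_mult[OF tendsto_const ell_lim[OF half_int_pos]] by simp
  from tannerys_theorem[OF this bound summable_mult[OF summable_inverse_half_int_squared]]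
  show ?thesis unfolding Phi_def[abs_def] by simp
qed

lemma Phi2_eq_double_sum:
  assumes "t \<ge> 0"
  shows "Phi2 t = (\<Sum>n. \<Sum>m. (-1)^n * ell2_term (half_int n) t m)"
  unfolding Phi2_def ell2_def
  by (intro suminf_cong suminf_mult[symmetric] summable_ell2_term[OF half_int_pos assms])

lemma f_prod_eq_exp_Phi:
  assumes "s = sin \<theta>" "c = cos \<theta>"
  shows "f_prod \<theta> y a = exp (Phi (y^2))"
proof -
  have "fac \<theta> y a n = exp ((-1)^n * ell (half_int n) (y^2))" for n
  proof -
    have pos: "cosh (U (half_int n) (y^2)) - S (half_int n) > 0"
      "cosh (U (half_int n) (y^2)) + S (half_int n) > 0"
      using cosh_U_minus_plus_S_pos[OF half_int_pos] by auto
    have "fac \<theta> y a n = ((cosh (U (half_int n) (y^2)) - S (half_int n)) /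
        (cosh (U (half_int n) (y^2)) + S (half_int n))) powi ((-1)^n)"
      unfolding fac_def Let_def U_def S_def half_int_def by (simp add: assms mult.assoc)
    also have "\<dots> = exp (ell (half_int n) (y^2)) powi ((-1)^n)"
      unfolding ell_def using pos by (simp add: exp_diff)
    also have "\<dots> = exp ((-1)^n * ell (half_int n) (y^2))"
      by (cases "even n") (simp_all add: exp_minus power_int_minus)
    finally show ?thesis .
  qed
  hence "f_prod \<theta> y a = (\<Prod>n. exp ((-1)^n * ell (half_int n) (y^2)))"
    unfolding f_prod_def by presburger
  also have "\<dots> = exp (Phi (y^2))"
    unfolding Phi_def by (rule prodinf_exp[OF summable_Phi]) simp
  finally show ?thesis .
qed

lemma scaled_phase_inverse: "scaled_phase (1 / a) s c"
  using a_pos c_pos sin_cos by unfold_locales auto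

text \<open>Replacing \<open>a\<close> by \<open>1 / a\<close> swaps the two indices of the quadratic form, so the
  double series for \<open>Phi2\<close> is transposed; absolute convergence allows the interchange.\<close>

lemma Phi2_inverse_scale:
  assumes t: "t \<ge> 0"
  shows "scaled_phase.Phi2 (1 / a) s c t = Phi2 t"
proof -
  interpret inv: scaled_phase "1 / a" s c by (rule scaled_phase_inverse)
  define F where "F n m = (-1)^n * ell2_term (half_int n) t m" for n m
  have "inv.qf \<sigma> t N M = qf \<sigma> t M N" for \<sigma> N M
    by (simp add: qf_def inv.qf_def algebra_simps)
  hence transpose: "(-1)^n * inv.ell2_term (half_int n) t m = F m n" for n m
    by (simp add: F_def ell2_term_def inv.ell2_term_def algebra_simps)
  have "inv.Phi2 t = (\<Sum>n. \<Sum>m. F m n)"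
    using inv.Phi2_eq_double_sum[OF t] by (simp add: transpose)
  also have "\<dots> = (\<Sum>m. \<Sum>n. F m n)"
  proof (rule suminf_swap_dominated)
    show "\<bar>F m n\<bar> \<le> 1 / (half_int n)^2 * (c^4 / (2 * kappa^2) * (1 / (half_int m)^2))" for n m
      using abs_ell2_term_le[OF half_int_pos t, of m n] by (simp add: F_def abs_mult mult_ac)
    show "summable (\<lambda>m. c^4 / (2 * kappa^2) * (1 / (half_int m)^2))"
      by (rule summable_mult[OF summable_inverse_half_int_squared])
  qed (use summable_inverse_half_int_squared in auto)
  also have "\<dots> = Phi2 t"
    using Phi2_eq_double_sum[OF t] by (simp add: F_def)
  finally show ?thesis .
qed

lemma Phi_inverse_scale:
  assumes "t > 0"
  shows "scaled_phase.Phi (1 / a) s c t = Phi t"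
proof -
  interpret inv: scaled_phase "1 / a" s c by (rule scaled_phase_inverse)
  have "Phi t - inv.Phi t = 0"
  proof (rule zero_if_second_derivative_zero_and_tendsto_zero
      [where D = "\<lambda>t. Phi t - inv.Phi t" and D' = "\<lambda>t. Phi1 t - inv.Phi1 t"])
    show "((\<lambda>t. Phi t - inv.Phi t) has_real_derivative Phi1 t - inv.Phi1 t) (at t)" if "t > 0" for t
      using that by (intro DERIV_diff Phi_has_real_derivative inv.Phi_has_real_derivative)
    show "((\<lambda>t. Phi1 t - inv.Phi1 t) has_real_derivative 0) (at t)" if "t > 0" for t
      using DERIV_diff[OF Phi1_has_real_derivative[OF that] inv.Phi1_has_real_derivative[OF that]]
        Phi2_inverse_scale[of t] that by simp
    show "((\<lambda>t. Phi t - inv.Phi t) \<longlongrightarrow> 0) at_top"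
      using tendsto_diff[OF Phi_tendsto_0 inv.Phi_tendsto_0] by simp
  qed (rule assms)
  thus ?thesis by simp
qed

end

theorem mainTheorem8:
  fixes \<theta> y \<alpha> :: real
  assumes "- (pi/2) < \<theta>" and "\<theta> < pi/2" and "y > 0" and "\<alpha> > 0"
  shows "f_prod \<theta> y \<alpha> = f_prod \<theta> y (1 / \<alpha>)"
proof -
  have "cos \<theta> > 0" using assms(1,2) by (intro cos_gt_zero_pi) auto
  then interpret scaled_phase \<alpha> "sin \<theta>" "cos \<theta>"
    using assms(4) by unfold_locales auto
  interpret inv: scaled_phase "1 / \<alpha>" "sin \<theta>" "cos \<theta>"
    by (rule scaled_phase_inverse)
  have "f_prod \<theta> y \<alpha> = exp (Phi (y^2))"
    by (rule f_prod_eq_exp_Phi) auto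
  also have "Phi (y^2) = inv.Phi (y^2)"
    using Phi_inverse_scale[of "y^2"] assms(3) by simp
  also have "exp (inv.Phi (y^2)) = f_prod \<theta> y (1 / \<alpha>)"
    by (rule inv.f_prod_eq_exp_Phi[symmetric]) auto
  finally show ?thesis .
qed

end
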